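(* Let $G$ be a finite simple graph and let $\mathcal{V}$ be a maximum-cardinality collection of pairwise edge-disjoint triangles of $G$. Let $t\notin\mathcal{V}$ be a triangle sharing an edge with exactly two triangles $\psi_1,\psi_2\in\mathcal{V}$, where neither $\psi_1$ nor $\psi_2$ is of type $0$. Then: (1) $type(t)\neq[3,3]$, so the type of $t$ is either $[1,3]$ or $[1,1]$. (2) If $type(t)=[1,3]$ with $type(\psi_1)=1$ and $type(\psi_2)=3$, then either (i) $base(\psi_1)\in E(t)$, or (ii) exactly one triangle is singly-attached to $\psi_1$ and its anchoring vertex lies in $V(t)$; in this case $base(\psi_1)$ does not contain the common vertex of $V(\psi_1)\cap V(\psi_2)$.
   Context: Triangles are sets of three pairwise adjacent vertices, identified with their edge sets. A triangle $t\notin\mathcal{V}$ is singly-attached to $\psi\in\mathcal{V}$ if $\psi$ is the only triangle of $\mathcal{V}$ sharing an edge with $t$; the shared edge is a base-edge and the vertex of $V(t)\setminus V(\psi)$ is the anchoring vertex of $t$. For $\psi\in\mathcal{V}$, $base(\psi)$ is the set of edges of $\psi$ that are base-edges of triangles singly-attached to $\psi$, and $\psi$ has type $i$ if $|base(\psi)|=i$; when $|base(\psi)|=1$ we also write $base(\psi)$ for its unique base-edge. A triangle $t\notin\mathcal{V}$ sharing an edge with exactly two triangles $\psi_1,\psi_2\in\mathcal{V}$ has type $[type(\psi_1),type(\psi_2)]$, listed in nondecreasing order. *)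

theory Defs
  imports Main
begin

definition simple_graph :: "'a set set \<Rightarrow> bool" where
  "simple_graph E \<longleftrightarrow> finite E \<and> (\<forall>e\<in>E. card e = 2)"

definition is_triangle :: "'a set set \<Rightarrow> 'a set set \<Rightarrow> bool" where
  "is_triangle E t \<longleftrightarrow> (\<exists>a b c. a \<noteq> b \<and> b \<noteq> c \<and> a \<noteq> c \<and>
      {a,b} \<in> E \<and> {b,c} \<in> E \<and> {a,c} \<in> E \<and> t = {{a,b},{b,c},{a,c}})"

definition tri_verts :: "'a set set \<Rightarrow> 'a set" where
  "tri_verts t = \<Union>t"

definition edge_disjoint_packing :: "'a set set \<Rightarrow> 'a set set set \<Rightarrow> bool" where
  "edge_disjoint_packing E W \<longleftrightarrow> (\<forall>t\<in>W. is_triangle E t) \<and>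
      (\<forall>t1\<in>W. \<forall>t2\<in>W. t1 \<noteq> t2 \<longrightarrow> t1 \<inter> t2 = {})"

definition max_packing :: "'a set set \<Rightarrow> 'a set set set \<Rightarrow> bool" where
  "max_packing E \<V> \<longleftrightarrow> edge_disjoint_packing E \<V> \<and>
      (\<forall>W. edge_disjoint_packing E W \<longrightarrow> card W \<le> card \<V>)"

definition singly_attached :: "'a set set \<Rightarrow> 'a set set set \<Rightarrow> 'a set set \<Rightarrow> 'a set set \<Rightarrow> bool" where
  "singly_attached E \<V> t \<psi> \<longleftrightarrow> is_triangle E t \<and> t \<notin> \<V> \<and> \<psi> \<in> \<V> \<and> t \<inter> \<psi> \<noteq> {} \<and>
      (\<forall>\<phi>\<in>\<V>. t \<inter> \<phi> \<noteq> {} \<longrightarrow> \<phi> = \<psi>)"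

definition anchor :: "'a set set \<Rightarrow> 'a set set \<Rightarrow> 'a" where
  "anchor t \<psi> = the_elem (tri_verts t - tri_verts \<psi>)"

definition base :: "'a set set \<Rightarrow> 'a set set set \<Rightarrow> 'a set set \<Rightarrow> 'a set set" where
  "base E \<V> \<psi> = {e \<in> \<psi>. \<exists>t. singly_attached E \<V> t \<psi> \<and> e \<in> t}"

text \<open>The unique base edge, when |base(psi)| = 1.\<close>
definition base_edge :: "'a set set \<Rightarrow> 'a set set set \<Rightarrow> 'a set set \<Rightarrow> 'a set" where
  "base_edge E \<V> \<psi> = the_elem (base E \<V> \<psi>)"

definition tri_type :: "'a set set \<Rightarrow> 'a set set set \<Rightarrow> 'a set set \<Rightarrow> nat" where
  "tri_type E \<V> \<psi> = card (base E \<V> \<psi>)"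

end

theory Submission
  imports Defs "HOL-Library.Ramsey"
begin

text \<open>
A triangle is the set \<open>[T]\<^bsup>2\<^esup>\<close> of 2-subsets of a 3-set \<open>T\<close> of vertices, so two
triangles are edge-disjoint iff they share at most one vertex, and all arguments reduce to
counting common vertices. The engine is an exchange argument: if some triangles of a maximum
packing could be replaced by more pairwise edge-disjoint triangles meeting nothing else of
the packing, maximality would fail. For a single packed triangle \<open>\<psi>\<close> this forces two
triangles singly attached along different edges of \<open>\<psi>\<close> to share their anchor \<open>a\<close>; then the
triangle on \<open>a\<close> and the third edge is singly attached as well, so \<open>|base \<psi>|\<close> is 0, 1 or 3.

Write \<open>t = uvw\<close>, \<open>\<psi>1 = uvp\<close>, \<open>\<psi>2 = vwq\<close>. If both \<open>\<psi>\<close>'s had type 3, the triangles attached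
along \<open>up\<close> and \<open>wq\<close> (whose anchors avoid \<open>\<psi>1\<close> and \<open>\<psi>2\<close>) together with \<open>t\<close> would replace
\<open>\<psi>1, \<psi>2\<close>. If \<open>\<psi>1\<close> has type 1 and \<open>\<psi>2\<close> type 3, the same exchange rules out the base edge
\<open>vp\<close> and forces every triangle attached along \<open>up\<close> to have anchor \<open>w\<close>, while along \<open>uv\<close> the
anchor cannot be \<open>w\<close>, as that triangle would be \<open>t\<close> itself.
\<close>

lemma nsets_Int: "[S \<inter> T]\<^bsup>k\<^esup> = [S]\<^bsup>k\<^esup> \<inter> [T]\<^bsup>k\<^esup>"
  by (auto simp: nsets_def)

lemma nsets_2_insert: "[insert a S]\<^bsup>2\<^esup> = [S]\<^bsup>2\<^esup> \<union> (\<lambda>x. {a, x}) ` (S - {a})"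
  by (auto simp: nsets_def card_2_iff subset_insert_iff insert_Diff_if)

lemma nsets_2_triple:
  assumes "a \<noteq> b" "b \<noteq> c" "a \<noteq> c"
  shows "[{a, b, c}]\<^bsup>2\<^esup> = {{a, b}, {b, c}, {a, c}}"
  using assms by (auto simp: nsets_def card_2_iff)

lemma nsets_2_of_card_2:
  assumes "card A = 2" shows "[A]\<^bsup>2\<^esup> = {A}"
proof -
  obtain x y where "A = {x, y}" "x \<noteq> y" using card_2_iff[THEN iffD1, OF assms] by blast
  then show ?thesis by simp
qed

lemma nsets_2_insert_subset:
  assumes "B \<subseteq> S1 \<union> S2" "a \<in> S1" "a \<in> S2"
  shows "[insert a B]\<^bsup>2\<^esup> \<subseteq> [B]\<^bsup>2\<^esup> \<union> [S1]\<^bsup>2\<^esup> \<union> [S2]\<^bsup>2\<^esup>"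
  using assms by (auto simp: nsets_2_insert)

lemma Union_nsets_2:
  assumes "2 \<le> card S" shows "\<Union> ([S]\<^bsup>2\<^esup>) = S"
proof -
  have "x \<in> \<Union> ([S]\<^bsup>2\<^esup>)" if "x \<in> S" for x
  proof -
    have "\<not> S \<subseteq> {x}"
      using assms card_mono[of "{x}" S] by auto
    then obtain y where "y \<in> S" "y \<noteq> x" by blast
    then show ?thesis using that by (intro UnionI[of "{x, y}"]) auto
  qed
  then show ?thesis by (auto simp: nsets_def)
qed

lemma card_Int_le_1_if_card_2:
  assumes "card A = 2" "card B = 2" "A \<noteq> B"
  shows "card (A \<inter> B) \<le> 1"
proof (rule ccontr)
  assume "\<not> card (A \<inter> B) \<le> 1"
  moreover have "finite A" "finite B" using assms by (auto intro: card_ge_0_finite)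
  ultimately have "card (A \<inter> B) = card A" "card (A \<inter> B) = card B"
    using assms card_mono[of A "A \<inter> B"] card_mono[of B "A \<inter> B"] by auto
  then have "A \<inter> B = A" "A \<inter> B = B"
    using card_subset_eq[OF \<open>finite A\<close>, of "A \<inter> B"] card_subset_eq[OF \<open>finite B\<close>, of "A \<inter> B"]
    by auto
  then show False using assms(3) by blast
qed

lemma Un_eq_if_card_2:
  assumes "finite P" "card P = 3" "A \<subseteq> P" "B \<subseteq> P" "card A = 2" "card B = 2" "A \<noteq> B"
  shows "A \<union> B = P"
proof -
  have "finite A" "finite B" using assms(1,3,4) finite_subset by blast+
  then have "card (A \<union> B) + card (A \<inter> B) = 4" using card_Un_Int[of A B] assms(5,6) by simp
  then have "3 \<le> card (A \<union> B)" using card_Int_le_1_if_card_2[OF assms(5-7)] by linarith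
  moreover have "card (A \<union> B) \<le> 3" using card_mono[OF assms(1), of "A \<union> B"] assms(2-4) by simp
  ultimately show ?thesis using card_subset_eq[OF assms(1), of "A \<union> B"] assms(2-4) by simp
qed

lemma triple_of_two_pairs:
  assumes "finite T" "card T = 3" "A \<subseteq> T" "B \<subseteq> T" "card A = 2" "card B = 2" "A \<noteq> B"
  obtains u v w where "A = {u, v}" "B = {v, w}" "T = {u, v, w}" "distinct [u, v, w]"
proof -
  have "finite A" "finite B" using assms(1,3,4) finite_subset by blast+
  have T: "A \<union> B = T" by (rule Un_eq_if_card_2[OF assms])
  then have "card (A \<inter> B) = 1"
    using card_Un_Int[OF \<open>finite A\<close> \<open>finite B\<close>] assms(2,5,6) by simp
  then obtain v where v: "A \<inter> B = {v}" by (rule card_1_singletonE)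
  then have "v \<in> A" "v \<in> B" by blast+
  then have "card (A - {v}) = 1" "card (B - {v}) = 1"
    using assms(5,6) \<open>finite A\<close> \<open>finite B\<close> by (simp_all add: card_Diff_singleton_if)
  then obtain u w where u: "A - {v} = {u}" and w: "B - {v} = {w}"
    by (meson card_1_singletonE)
  have "A = {u, v}" "B = {v, w}" using u w v by blast+
  moreover have "distinct [u, v, w]" using u w v by auto
  ultimately show ?thesis using that T by blast
qed

lemma triangle_verts:
  assumes "is_triangle E t"
  shows "card (tri_verts t) = 3" "finite (tri_verts t)" "[tri_verts t]\<^bsup>2\<^esup> = t" "t \<subseteq> E"
proof -
  obtain a b c where abc: "a \<noteq> b" "b \<noteq> c" "a \<noteq> c" "t = {{a, b}, {b, c}, {a, c}}"
    and "{a, b} \<in> E" "{b, c} \<in> E" "{a, c} \<in> E"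
    using assms unfolding is_triangle_def by blast
  moreover have "tri_verts t = {a, b, c}"
    using abc unfolding tri_verts_def by auto
  ultimately show "card (tri_verts t) = 3" "finite (tri_verts t)" "[tri_verts t]\<^bsup>2\<^esup> = t" "t \<subseteq> E"
    by (simp_all add: nsets_2_triple)
qed

lemma tri_verts_nsets_2: "card T = 3 \<Longrightarrow> tri_verts ([T]\<^bsup>2\<^esup>) = T"
  unfolding tri_verts_def by (simp add: Union_nsets_2)

lemma is_triangle_nsets_2:
  assumes "card T = 3" "[T]\<^bsup>2\<^esup> \<subseteq> E"
  shows "is_triangle E ([T]\<^bsup>2\<^esup>)"
proof -
  obtain a b c where T: "T = {a, b, c}" and abc: "a \<noteq> b" "b \<noteq> c" "a \<noteq> c"
    using card_3_iff[THEN iffD1, OF assms(1)] by blast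
  then have t: "[T]\<^bsup>2\<^esup> = {{a, b}, {b, c}, {a, c}}"
    by (simp add: nsets_2_triple)
  show ?thesis
    unfolding is_triangle_def t
    by (intro exI[of _ a] exI[of _ b] exI[of _ c]) (use abc assms(2) t in simp)
qed

lemma card_triangle:
  assumes "is_triangle E t" shows "card t = 3"
proof -
  have "card ([tri_verts t]\<^bsup>2\<^esup>) = 3" using triangle_verts(1)[OF assms] by (simp add: choose_two)
  then show ?thesis by (simp only: triangle_verts(3)[OF assms])
qed

lemma doubleton_in_triangle:
  assumes "is_triangle E s" "x \<noteq> y" "x \<in> tri_verts s" "y \<in> tri_verts s"
  shows "{x, y} \<in> s"
proof -
  have "{x, y} \<in> [tri_verts s]\<^bsup>2\<^esup>" using assms(2-4) by simp
  then show ?thesis by (simp only: triangle_verts(3)[OF assms(1)])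
qed

lemma triangle_eqI:
  assumes "is_triangle E s" "is_triangle E' t" "tri_verts s = tri_verts t"
  shows "s = t"
  using triangle_verts(3)[OF assms(1)] triangle_verts(3)[OF assms(2)] assms(3) by metis

lemma Int_triangles:
  assumes "is_triangle E s" "is_triangle E' s'"
  shows "s \<inter> s' = [tri_verts s \<inter> tri_verts s']\<^bsup>2\<^esup>"
  by (simp only: nsets_Int triangle_verts(3)[OF assms(1)] triangle_verts(3)[OF assms(2)])

lemma triangles_disjoint_iff:
  assumes "is_triangle E s" "is_triangle E' s'"
  shows "s \<inter> s' = {} \<longleftrightarrow> card (tri_verts s \<inter> tri_verts s') \<le> 1"
  unfolding Int_triangles[OF assms] using triangle_verts(2)[OF assms(1)]
  by (simp add: nsets_eq_empty_iff less_2_cases_iff le_Suc_eq)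

lemma triangles_share_edge:
  assumes s: "is_triangle E s" and \<psi>: "is_triangle E' \<psi>" and "s \<noteq> \<psi>" "s \<inter> \<psi> \<noteq> {}"
  shows "card (tri_verts s \<inter> tri_verts \<psi>) = 2"
    and "s \<inter> \<psi> = {tri_verts s \<inter> tri_verts \<psi>}"
    and "tri_verts s - tri_verts \<psi> = {anchor s \<psi>}"
proof -
  let ?S = "tri_verts s" and ?P = "tri_verts \<psi>"
  note S = triangle_verts[OF s] and P = triangle_verts[OF \<psi>]
  have "?S \<noteq> ?P" using triangle_eqI[OF s \<psi>] \<open>s \<noteq> \<psi>\<close> by blast
  then have "card (?S \<inter> ?P) \<noteq> 3"
    using card_subset_eq[OF S(2), of "?S \<inter> ?P"] card_subset_eq[OF P(2), of "?S \<inter> ?P"] S(1) P(1)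
    by auto
  moreover have "card (?S \<inter> ?P) \<le> 3" using card_mono[OF S(2), of "?S \<inter> ?P"] S(1) by simp
  moreover have "\<not> card (?S \<inter> ?P) \<le> 1" using triangles_disjoint_iff[OF s \<psi>] \<open>s \<inter> \<psi> \<noteq> {}\<close> by simp
  ultimately show card2: "card (?S \<inter> ?P) = 2" by linarith
  show "s \<inter> \<psi> = {?S \<inter> ?P}" by (simp add: Int_triangles[OF s \<psi>] nsets_2_of_card_2[OF card2])
  have "card (?S - ?P) = 1"
    using card_Diff_subset_Int[of ?S ?P] S(1,2) card2 by (simp add: Diff_Int_distrib2)
  then obtain c where c: "?S - ?P = {c}" by (rule card_1_singletonE)
  then show "?S - ?P = {anchor s \<psi>}" by (simp add: anchor_def)
qed

lemma edge_disjoint_packingD: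
  assumes "edge_disjoint_packing E V"
  shows "\<psi> \<in> V \<Longrightarrow> is_triangle E \<psi>"
    and "\<psi> \<in> V \<Longrightarrow> \<phi> \<in> V \<Longrightarrow> \<psi> \<inter> \<phi> \<noteq> {} \<Longrightarrow> \<psi> = \<phi>"
  using assms unfolding edge_disjoint_packing_def by blast+

lemma singly_attached_verts:
  assumes V: "edge_disjoint_packing E V" and s: "singly_attached E V s \<psi>"
  shows "card (tri_verts s \<inter> tri_verts \<psi>) = 2"
    and "s \<inter> \<psi> = {tri_verts s \<inter> tri_verts \<psi>}"
    and "tri_verts s - tri_verts \<psi> = {anchor s \<psi>}"
proof -
  have "is_triangle E s" "\<psi> \<in> V" "s \<noteq> \<psi>" "s \<inter> \<psi> \<noteq> {}"
    using s unfolding singly_attached_def by blast+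
  note shared = triangles_share_edge[OF this(1) edge_disjoint_packingD(1)[OF V this(2)] this(3,4)]
  show "card (tri_verts s \<inter> tri_verts \<psi>) = 2" by (fact shared(1))
  show "s \<inter> \<psi> = {tri_verts s \<inter> tri_verts \<psi>}" by (fact shared(2))
  show "tri_verts s - tri_verts \<psi> = {anchor s \<psi>}" by (fact shared(3))
qed

lemma mem_base_iff:
  assumes "edge_disjoint_packing E V"
  shows "e \<in> base E V \<psi> \<longleftrightarrow> (\<exists>s. singly_attached E V s \<psi> \<and> s \<inter> \<psi> = {e})"
proof
  assume "e \<in> base E V \<psi>"
  then obtain s where s: "singly_attached E V s \<psi>" "e \<in> s" "e \<in> \<psi>" unfolding base_def by blast
  then show "\<exists>s. singly_attached E V s \<psi> \<and> s \<inter> \<psi> = {e}"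
    using singly_attached_verts(2)[OF assms s(1)] by blast
qed (auto simp: base_def)

lemma base_subset: "base E V \<psi> \<subseteq> \<psi>"
  unfolding base_def by blast

lemma edge_disjoint_packing_empty [simp]: "edge_disjoint_packing E {}"
  by (simp add: edge_disjoint_packing_def)

lemma edge_disjoint_packing_insert:
  "edge_disjoint_packing E (insert s W) \<longleftrightarrow>
     is_triangle E s \<and> (\<forall>w\<in>W. w \<noteq> s \<longrightarrow> s \<inter> w = {}) \<and> edge_disjoint_packing E W"
proof -
  have "edge_disjoint_packing E W \<longleftrightarrow> (\<forall>t\<in>W. is_triangle E t) \<and> pairwise disjnt W" for W
    unfolding edge_disjoint_packing_def pairwise_def disjnt_def by blast
  then show ?thesis
    by (simp add: pairwise_insert disjnt_def Int_commute) blast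
qed

lemma finite_packing:
  assumes "finite E" "edge_disjoint_packing E W" shows "finite W"
proof -
  have "W \<subseteq> Pow E" using assms(2) triangle_verts(4) unfolding edge_disjoint_packing_def by blast
  then show ?thesis using assms(1) by (simp add: finite_subset)
qed

lemma max_packing_exchange:
  assumes max: "max_packing E V" and "finite E" and "X \<subseteq> V" and Y: "edge_disjoint_packing E Y"
    and meets: "\<And>y \<phi>. y \<in> Y \<Longrightarrow> \<phi> \<in> V \<Longrightarrow> y \<inter> \<phi> \<noteq> {} \<Longrightarrow> \<phi> \<in> X"
  shows "card Y \<le> card X"
proof -
  have V: "edge_disjoint_packing E V" using max by (simp add: max_packing_def)
  have "edge_disjoint_packing E ((V - X) \<union> Y)"
    unfolding edge_disjoint_packing_def
  proof (intro conjI ballI impI)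
    fix s assume "s \<in> (V - X) \<union> Y"
    then show "is_triangle E s" using V Y by (auto simp: edge_disjoint_packing_def)
  next
    fix s1 s2 assume "s1 \<in> (V - X) \<union> Y" "s2 \<in> (V - X) \<union> Y" "s1 \<noteq> s2"
    moreover have cross: "a \<inter> b = {}" if "a \<in> V - X" "b \<in> Y" for a b
      using meets[of b a] that by blast
    ultimately show "s1 \<inter> s2 = {}"
      using edge_disjoint_packingD(2)[OF V, of s1 s2] edge_disjoint_packingD(2)[OF Y, of s1 s2]
        cross[of s1 s2] cross[of s2 s1] by blast
  qed
  then have "card ((V - X) \<union> Y) \<le> card V" using max by (simp add: max_packing_def)
  moreover have "(V - X) \<inter> Y = {}"
  proof -
    \<comment> \<open>a member of \<open>Y\<close> lying in \<open>V\<close> meets itself, hence lies in \<open>X\<close>\<close>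
    have "y \<in> X" if "y \<in> Y" "y \<in> V" for y
      using meets[OF that] card_triangle edge_disjoint_packingD(1)[OF Y \<open>y \<in> Y\<close>] by fastforce
    then show ?thesis by blast
  qed
  moreover have "finite V" "finite Y" using finite_packing \<open>finite E\<close> V Y by blast+
  ultimately show ?thesis
    using card_Un_disjoint[of "V - X" Y] card_Diff_subset[of X V] card_mono[of V X]
      \<open>X \<subseteq> V\<close> finite_subset[of X V] by fastforce
qed

lemma singly_attached_verts_eq:
  assumes "edge_disjoint_packing E V" "singly_attached E V s \<psi>" "s \<inter> \<psi> = {e}"
  shows "tri_verts s = insert (anchor s \<psi>) e" "anchor s \<psi> \<notin> tri_verts \<psi>"
proof -
  note v = singly_attached_verts[OF assms(1,2)]
  have "tri_verts s \<inter> tri_verts \<psi> = e" using v(2) assms(3) by simp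
  then show "tri_verts s = insert (anchor s \<psi>) e" "anchor s \<psi> \<notin> tri_verts \<psi>" using v(3) by blast+
qed

lemma singly_attached_Int_eq_if_base:
  assumes "edge_disjoint_packing E V" "singly_attached E V s \<psi>" "base E V \<psi> = {e}"
  shows "s \<inter> \<psi> = {e}"
proof -
  have "tri_verts s \<inter> tri_verts \<psi> \<in> base E V \<psi>"
    unfolding mem_base_iff[OF assms(1)] using assms(2) singly_attached_verts(2)[OF assms(1,2)] by blast
  then show ?thesis using assms(3) singly_attached_verts(2)[OF assms(1,2)] by simp
qed

lemma singly_attached_disjoint_if_anchors_differ:
  assumes V: "edge_disjoint_packing E V"
    and s1: "singly_attached E V s1 \<psi>" and s2: "singly_attached E V s2 \<psi>"
    and "s1 \<inter> \<psi> \<noteq> s2 \<inter> \<psi>" and anchors: "anchor s1 \<psi> \<noteq> anchor s2 \<psi>"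
  shows "s1 \<inter> s2 = {}"
proof -
  let ?B1 = "tri_verts s1 \<inter> tri_verts \<psi>" and ?B2 = "tri_verts s2 \<inter> tri_verts \<psi>"
  note v1 = singly_attached_verts[OF V s1] and v2 = singly_attached_verts[OF V s2]
  have tri: "is_triangle E s1" "is_triangle E s2"
    using s1 s2 unfolding singly_attached_def by blast+
  have "?B1 \<noteq> ?B2" using \<open>s1 \<inter> \<psi> \<noteq> s2 \<inter> \<psi>\<close> by (simp add: v1(2) v2(2))
  then have "card (?B1 \<inter> ?B2) \<le> 1" using v1(1) v2(1) by (rule card_Int_le_1_if_card_2[rotated 2])
  moreover have "tri_verts s1 \<inter> tri_verts s2 \<subseteq> ?B1 \<inter> ?B2"
  proof
    fix x assume x: "x \<in> tri_verts s1 \<inter> tri_verts s2"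
    have "x \<in> tri_verts \<psi>"
    proof (rule ccontr)
      assume "x \<notin> tri_verts \<psi>"
      then have "x \<in> tri_verts s1 - tri_verts \<psi>" "x \<in> tri_verts s2 - tri_verts \<psi>" using x by blast+
      then show False using v1(3) v2(3) anchors by simp
    qed
    then show "x \<in> ?B1 \<inter> ?B2" using x by blast
  qed
  then have "card (tri_verts s1 \<inter> tri_verts s2) \<le> card (?B1 \<inter> ?B2)"
    using triangle_verts(2)[OF tri(1)] by (intro card_mono) simp_all
  ultimately show ?thesis by (simp add: triangles_disjoint_iff[OF tri])
qed

lemma singly_attached_same_anchor:
  assumes max: "max_packing E V" and "finite E"
    and s1: "singly_attached E V s1 \<psi>" and s2: "singly_attached E V s2 \<psi>"
    and "s1 \<inter> \<psi> \<noteq> s2 \<inter> \<psi>"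
  shows "anchor s1 \<psi> = anchor s2 \<psi>"
proof (rule ccontr)
  assume "anchor s1 \<psi> \<noteq> anchor s2 \<psi>"
  moreover have V: "edge_disjoint_packing E V" using max by (simp add: max_packing_def)
  ultimately have disj: "s1 \<inter> s2 = {}"
    using singly_attached_disjoint_if_anchors_differ[OF _ s1 s2 \<open>s1 \<inter> \<psi> \<noteq> s2 \<inter> \<psi>\<close>] by blast
  have tri: "is_triangle E s1" "is_triangle E s2"
    using s1 s2 unfolding singly_attached_def by blast+
  have "card {s1, s2} \<le> card {\<psi>}"
  proof (rule max_packing_exchange[OF max \<open>finite E\<close>])
    show "{\<psi>} \<subseteq> V" using s1 unfolding singly_attached_def by blast
    show "edge_disjoint_packing E {s1, s2}"
      using tri disj by (simp add: edge_disjoint_packing_insert Int_commute)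
    show "\<phi> \<in> {\<psi>}" if "y \<in> {s1, s2}" "\<phi> \<in> V" "y \<inter> \<phi> \<noteq> {}" for y \<phi>
      using that s1 s2 unfolding singly_attached_def by blast
  qed
  moreover have "s1 \<noteq> s2"
  proof
    assume "s1 = s2"
    then have "s1 = {}" using disj by simp
    then show False using card_triangle[OF tri(1)] by simp
  qed
  ultimately show False by simp
qed

lemma singly_attached_if_edges_covered:
  assumes V: "edge_disjoint_packing E V" and "\<psi> \<in> V"
    and s: "is_triangle E s" "s \<noteq> \<psi>" "s \<inter> \<psi> \<noteq> {}" "s \<subseteq> \<psi> \<union> s1 \<union> s2"
    and s1: "singly_attached E V s1 \<psi>" and s2: "singly_attached E V s2 \<psi>"
  shows "singly_attached E V s \<psi>"
proof -
  have only: "\<phi> = \<psi>" if "\<phi> \<in> V" "s \<inter> \<phi> \<noteq> {}" for \<phi>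
  proof -
    have "\<psi> \<inter> \<phi> \<noteq> {} \<or> s1 \<inter> \<phi> \<noteq> {} \<or> s2 \<inter> \<phi> \<noteq> {}" using that(2) s(4) by blast
    then show ?thesis
      using edge_disjoint_packingD(2)[OF V \<open>\<psi> \<in> V\<close> that(1)] s1 s2 that(1)
      unfolding singly_attached_def by blast
  qed
  moreover have "s \<notin> V"
  proof
    assume "s \<in> V"
    moreover have "s \<noteq> {}" using card_triangle[OF s(1)] by auto
    ultimately show False using only[of s] s(2) by blast
  qed
  ultimately show ?thesis
    unfolding singly_attached_def using s(1,3) \<open>\<psi> \<in> V\<close> by blast
qed

lemma mem_base_if_common_anchor:
  assumes V: "edge_disjoint_packing E V"
    and s1: "singly_attached E V s1 \<psi>" and s2: "singly_attached E V s2 \<psi>"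
    and "s1 \<inter> \<psi> \<noteq> s2 \<inter> \<psi>" and anchor: "anchor s1 \<psi> = anchor s2 \<psi>" and "e \<in> \<psi>"
  shows "e \<in> base E V \<psi>"
proof -
  let ?a = "anchor s1 \<psi>" and ?P = "tri_verts \<psi>" and ?s = "[insert (anchor s1 \<psi>) e]\<^bsup>2\<^esup>"
  let ?B1 = "tri_verts s1 \<inter> ?P" and ?B2 = "tri_verts s2 \<inter> ?P"
  note v1 = singly_attached_verts[OF V s1] and v2 = singly_attached_verts[OF V s2]
  have tri: "is_triangle E \<psi>" "is_triangle E s1" "is_triangle E s2" and "\<psi> \<in> V"
    using s1 s2 V unfolding singly_attached_def edge_disjoint_packing_def by blast+
  note P = triangle_verts[OF tri(1)]
  have "?B1 \<noteq> ?B2" using \<open>s1 \<inter> \<psi> \<noteq> s2 \<inter> \<psi>\<close> by (simp add: v1(2) v2(2))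
  then have "?B1 \<union> ?B2 = ?P"
    using Un_eq_if_card_2[OF P(2,1) _ _ v1(1) v2(1)] by blast
  moreover have "e \<in> [?P]\<^bsup>2\<^esup>" using \<open>e \<in> \<psi>\<close> by (simp add: P(3))
  ultimately have e: "e \<subseteq> ?P" "e \<subseteq> tri_verts s1 \<union> tri_verts s2" "card e = 2"
    by (auto simp: nsets_def)
  have a: "?a \<in> tri_verts s1" "?a \<in> tri_verts s2" "?a \<notin> ?P" using v1(3) v2(3) anchor by blast+
  have "[e]\<^bsup>2\<^esup> = {e}" using e(3) by (rule nsets_2_of_card_2)
  then have "?s \<subseteq> \<psi> \<union> s1 \<union> s2"
    using nsets_2_insert_subset[OF e(2) a(1,2)] \<open>e \<in> \<psi>\<close>
    by (simp add: triangle_verts(3)[OF tri(2)] triangle_verts(3)[OF tri(3)]) blast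
  moreover have card3: "card (insert ?a e) = 3"
    using e a(3) P(1) card_ge_0_finite[of e] by (auto simp: card_insert_if)
  moreover from calculation have "is_triangle E ?s"
    using triangle_verts(4)[OF tri(1)] triangle_verts(4)[OF tri(2)] triangle_verts(4)[OF tri(3)]
    by (intro is_triangle_nsets_2) auto
  moreover have "?s \<noteq> \<psi>" using a(3) tri_verts_nsets_2[OF card3] by auto
  moreover have "e \<in> ?s" using e(3) card_ge_0_finite[of e] by (auto simp: nsets_def)
  ultimately have "singly_attached E V ?s \<psi>"
    using singly_attached_if_edges_covered[OF V \<open>\<psi> \<in> V\<close> _ _ _ _ s1 s2] \<open>e \<in> \<psi>\<close> by blast
  then show ?thesis unfolding base_def using \<open>e \<in> \<psi>\<close> \<open>e \<in> ?s\<close> by blast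
qed

lemma base_eq_if_two_edges:
  assumes max: "max_packing E V" and "finite E"
    and "e1 \<in> base E V \<psi>" "e2 \<in> base E V \<psi>" "e1 \<noteq> e2"
  shows "base E V \<psi> = \<psi>"
proof -
  have V: "edge_disjoint_packing E V" using max by (simp add: max_packing_def)
  obtain s1 s2 where s1: "singly_attached E V s1 \<psi>" "s1 \<inter> \<psi> = {e1}"
    and s2: "singly_attached E V s2 \<psi>" "s2 \<inter> \<psi> = {e2}"
    using assms(3,4) mem_base_iff[OF V] by meson
  then have "s1 \<inter> \<psi> \<noteq> s2 \<inter> \<psi>" using \<open>e1 \<noteq> e2\<close> by simp
  moreover from this have "anchor s1 \<psi> = anchor s2 \<psi>"
    by (rule singly_attached_same_anchor[OF max \<open>finite E\<close> s1(1) s2(1)])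
  ultimately have "\<psi> \<subseteq> base E V \<psi>"
    using mem_base_if_common_anchor[OF V s1(1) s2(1)] by blast
  then show ?thesis using base_subset by blast
qed

lemma tri_type_cases:
  assumes max: "max_packing E V" and "finite E" and "\<psi> \<in> V"
  shows "tri_type E V \<psi> = 0 \<or> tri_type E V \<psi> = 1 \<or> tri_type E V \<psi> = 3"
proof -
  have "is_triangle E \<psi>" using assms(3) max by (simp add: max_packing_def edge_disjoint_packing_def)
  then have "card \<psi> = 3" by (rule card_triangle)
  then have "finite \<psi>" by (intro card_ge_0_finite) simp
  then have "finite (base E V \<psi>)" using base_subset by (rule finite_subset[rotated])
  show ?thesis
  proof (cases "card (base E V \<psi>) \<le> 1")
    case True
    then show ?thesis unfolding tri_type_def by linarith
  next
    case False
    then obtain e1 e2 where "e1 \<in> base E V \<psi>" "e2 \<in> base E V \<psi>" "e1 \<noteq> e2"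
      using card_le_Suc0_iff_eq[OF \<open>finite (base E V \<psi>)\<close>] by auto
    then have "base E V \<psi> = \<psi>" by (rule base_eq_if_two_edges[OF max \<open>finite E\<close>])
    then show ?thesis unfolding tri_type_def using \<open>card \<psi> = 3\<close> by simp
  qed
qed

lemma base_eq_if_tri_type_3:
  assumes "edge_disjoint_packing E V" "\<psi> \<in> V" "tri_type E V \<psi> = 3"
  shows "base E V \<psi> = \<psi>"
proof -
  have "card \<psi> = 3" using card_triangle edge_disjoint_packingD(1)[OF assms(1,2)] by blast
  then show ?thesis
    using card_subset_eq[OF _ base_subset, of \<psi>] card_ge_0_finite[of \<psi>] assms(3)
    unfolding tri_type_def by simp
qed

lemma tri_type_3_same_anchor:
  assumes max: "max_packing E V" and "finite E" and "\<psi> \<in> V" and "tri_type E V \<psi> = 3"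
    and s: "singly_attached E V s \<psi>" and s': "singly_attached E V s' \<psi>"
  shows "anchor s \<psi> = anchor s' \<psi>"
proof (cases "s \<inter> \<psi> = s' \<inter> \<psi>")
  case True
  have V: "edge_disjoint_packing E V" using max by (simp add: max_packing_def)
  have "card \<psi> = 3" using card_triangle edge_disjoint_packingD(1)[OF V \<open>\<psi> \<in> V\<close>] by blast
  then have "\<not> \<psi> \<subseteq> {tri_verts s \<inter> tri_verts \<psi>}"
    using card_mono[of "{tri_verts s \<inter> tri_verts \<psi>}" \<psi>] by auto
  then obtain e where "e \<in> \<psi>" "{e} \<noteq> s \<inter> \<psi>"
    using singly_attached_verts(2)[OF V s] by auto
  then obtain s'' where s'': "singly_attached E V s'' \<psi>" "s'' \<inter> \<psi> = {e}"
    using base_eq_if_tri_type_3[OF V assms(3,4)] mem_base_iff[OF V] by blast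
  have "anchor s \<psi> = anchor s'' \<psi>" "anchor s' \<psi> = anchor s'' \<psi>"
    using singly_attached_same_anchor[OF max \<open>finite E\<close> s s''(1)]
      singly_attached_same_anchor[OF max \<open>finite E\<close> s' s''(1)] s''(2) True \<open>{e} \<noteq> s \<inter> \<psi>\<close>
    by auto
  then show ?thesis by simp
next
  case False
  then show ?thesis by (rule singly_attached_same_anchor[OF max \<open>finite E\<close> s s'])
qed

lemma tri_type_3_anchor_notin_neighbour:
  assumes max: "max_packing E V" and "finite E" and "\<psi> \<in> V" "\<phi> \<in> V" "\<phi> \<noteq> \<psi>"
    and x: "x \<in> tri_verts \<psi>" "x \<in> tri_verts \<phi>"
    and "tri_type E V \<psi> = 3" and s: "singly_attached E V s \<psi>"
  shows "anchor s \<psi> \<notin> tri_verts \<phi>"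
proof
  assume a: "anchor s \<psi> \<in> tri_verts \<phi>"
  have V: "edge_disjoint_packing E V" using max by (simp add: max_packing_def)
  have tri: "is_triangle E \<psi>" "is_triangle E \<phi>"
    using edge_disjoint_packingD(1)[OF V] assms(3,4) by blast+
  have "\<not> tri_verts \<psi> \<subseteq> {x}"
    using card_mono[of "{x}" "tri_verts \<psi>"] triangle_verts(1)[OF tri(1)] by auto
  then obtain y where "y \<in> tri_verts \<psi>" "y \<noteq> x" by blast
  then have "{x, y} \<in> [tri_verts \<psi>]\<^bsup>2\<^esup>" using x(1) by simp
  then have "{x, y} \<in> base E V \<psi>"
    by (simp add: base_eq_if_tri_type_3[OF V assms(3,8)] triangle_verts(3)[OF tri(1)])
  then obtain s' where s': "singly_attached E V s' \<psi>" "s' \<inter> \<psi> = {{x, y}}"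
    using mem_base_iff[OF V] by blast
  note v' = singly_attached_verts[OF V s'(1)]
  have "anchor s' \<psi> = anchor s \<psi>"
    by (rule tri_type_3_same_anchor[OF max \<open>finite E\<close> assms(3,8) s'(1) s])
  then have "tri_verts s' - tri_verts \<psi> = {anchor s \<psi>}" using v'(3) by simp
  then have "anchor s \<psi> \<in> tri_verts s'" "anchor s \<psi> \<noteq> x" using x(1) by blast+
  moreover have "x \<in> tri_verts s'"
    using v'(2) s'(2) by (metis Int_iff insertI1 singleton_inject)
  ultimately have "{x, anchor s \<psi>} \<in> [tri_verts s']\<^bsup>2\<^esup> \<inter> [tri_verts \<phi>]\<^bsup>2\<^esup>"
    using x(2) a by simp
  moreover have "is_triangle E s'" using s'(1) unfolding singly_attached_def by blast
  ultimately have "{x, anchor s \<psi>} \<in> s' \<inter> \<phi>"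
    using tri(2) by (simp only: triangle_verts(3))
  then have "s' \<inter> \<phi> \<noteq> {}" by blast
  then show False using s'(1) assms(4,5) unfolding singly_attached_def by blast
qed

lemma tri_type_3_attached_along:
  assumes max: "max_packing E V" and "finite E" and "\<psi> \<in> V" "\<phi> \<in> V" "\<phi> \<noteq> \<psi>"
    and "x \<in> tri_verts \<psi>" "x \<in> tri_verts \<phi>" and "tri_type E V \<psi> = 3" and "e \<in> \<psi>"
  obtains s where "singly_attached E V s \<psi>" "tri_verts s = insert (anchor s \<psi>) e"
    "anchor s \<psi> \<notin> tri_verts \<psi>" "anchor s \<psi> \<notin> tri_verts \<phi>"
proof -
  have V: "edge_disjoint_packing E V" using max by (simp add: max_packing_def)
  have "e \<in> base E V \<psi>" using base_eq_if_tri_type_3[OF V assms(3,8)] \<open>e \<in> \<psi>\<close> by simp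
  then obtain s where s: "singly_attached E V s \<psi>" "s \<inter> \<psi> = {e}" using mem_base_iff[OF V] by blast
  show ?thesis
    by (rule that[OF s(1) singly_attached_verts_eq[OF V s]
          tri_type_3_anchor_notin_neighbour[OF max \<open>finite E\<close> assms(3-8) s(1)]])
qed

lemma two_attached_configuration:
  assumes t: "is_triangle E t" and \<psi>1: "is_triangle E \<psi>1" and \<psi>2: "is_triangle E \<psi>2"
    and "t \<noteq> \<psi>1" "t \<noteq> \<psi>2" "t \<inter> \<psi>1 \<noteq> {}" "t \<inter> \<psi>2 \<noteq> {}" "\<psi>1 \<inter> \<psi>2 = {}"
  obtains u v w p q where "tri_verts t = {u, v, w}" "tri_verts \<psi>1 = {u, v, p}"
    "tri_verts \<psi>2 = {v, w, q}" "distinct [u, v, w, p, q]"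
proof -
  let ?T = "tri_verts t" and ?P1 = "tri_verts \<psi>1" and ?P2 = "tri_verts \<psi>2"
  note T = triangle_verts[OF t]
  have flipped: "\<psi>1 \<noteq> t" "\<psi>1 \<inter> t \<noteq> {}" "\<psi>2 \<noteq> t" "\<psi>2 \<inter> t \<noteq> {}"
    using assms(4-7) by blast+
  have share1: "card (?T \<inter> ?P1) = 2" "?P1 - ?T = {anchor \<psi>1 t}"
    using triangles_share_edge(1)[OF t \<psi>1 assms(4,6)]
      triangles_share_edge(3)[OF \<psi>1 t flipped(1,2)] by simp_all
  have share2: "card (?T \<inter> ?P2) = 2" "?P2 - ?T = {anchor \<psi>2 t}"
    using triangles_share_edge(1)[OF t \<psi>2 assms(5,7)]
      triangles_share_edge(3)[OF \<psi>2 t flipped(3,4)] by simp_all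
  have P12: "card (?P1 \<inter> ?P2) \<le> 1" using triangles_disjoint_iff[OF \<psi>1 \<psi>2] assms(8) by simp
  have "?T \<inter> ?P1 \<noteq> ?T \<inter> ?P2"
  proof
    assume "?T \<inter> ?P1 = ?T \<inter> ?P2"
    then have "card (?T \<inter> ?P1) \<le> card (?P1 \<inter> ?P2)"
      using triangle_verts(2)[OF \<psi>1] by (intro card_mono) auto
    then show False using share1(1) P12 by simp
  qed
  then obtain u v w where uvw: "?T \<inter> ?P1 = {u, v}" "?T \<inter> ?P2 = {v, w}" "?T = {u, v, w}" "distinct [u, v, w]"
    by (rule triple_of_two_pairs[OF T(2,1) Int_lower1 Int_lower1 share1(1) share2(1)])
  define p q where "p = anchor \<psi>1 t" and "q = anchor \<psi>2 t"
  have "?P1 = (?P1 - ?T) \<union> (?T \<inter> ?P1)" by blast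
  also have "\<dots> = {u, v, p}" using uvw(1) share1(2) unfolding p_def by auto
  finally have P1: "?P1 = {u, v, p}" .
  have "?P2 = (?P2 - ?T) \<union> (?T \<inter> ?P2)" by blast
  also have "\<dots> = {v, w, q}" using uvw(2) share2(2) unfolding q_def by auto
  finally have P2: "?P2 = {v, w, q}" .
  have "p \<notin> ?T" "q \<notin> ?T" using share1(2) share2(2) unfolding p_def q_def by blast+
  have "p \<noteq> q"
  proof
    assume "p = q"
    then have "{v, p} \<subseteq> ?P1 \<inter> ?P2" using P1 P2 by blast
    then have "card {v, p} \<le> card (?P1 \<inter> ?P2)"
      using triangle_verts(2)[OF \<psi>1] by (intro card_mono) simp_all
    moreover have "v \<noteq> p" using \<open>p \<notin> ?T\<close> uvw(3) by blast
    ultimately show False using P12 by simp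
  qed
  then have "distinct [u, v, w, p, q]" using uvw(3,4) \<open>p \<notin> ?T\<close> \<open>q \<notin> ?T\<close> by auto
  with that uvw(3) P1 P2 show ?thesis by blast
qed

lemma card_le_1_if_subset_singleton: "A \<subseteq> {x} \<Longrightarrow> card A \<le> 1"
  using card_mono[of "{x}" A] by simp

locale two_attached_triangle =
  fixes E :: "'a set set" and V :: "'a set set set" and t \<psi>1 \<psi>2 :: "'a set set"
    and u v w p q :: 'a
  assumes max_packing: "max_packing E V" and finite_E: "finite E"
    and t: "is_triangle E t" "t \<notin> V" and \<psi>_in_V: "\<psi>1 \<in> V" "\<psi>2 \<in> V"
    and meets_only: "\<And>\<phi>. \<phi> \<in> V \<Longrightarrow> t \<inter> \<phi> \<noteq> {} \<Longrightarrow> \<phi> = \<psi>1 \<or> \<phi> = \<psi>2"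
    and verts: "tri_verts t = {u, v, w}" "tri_verts \<psi>1 = {u, v, p}" "tri_verts \<psi>2 = {v, w, q}"
    and distinct: "distinct [u, v, w, p, q]"
begin

lemma packing: "edge_disjoint_packing E V"
  using max_packing by (simp add: max_packing_def)

lemma \<psi>_triangle: "is_triangle E \<psi>1" "is_triangle E \<psi>2"
  using edge_disjoint_packingD(1)[OF packing] \<psi>_in_V by blast+

lemma \<psi>1_ne_\<psi>2: "\<psi>1 \<noteq> \<psi>2"
proof
  assume "\<psi>1 = \<psi>2"
  then have "p \<in> tri_verts \<psi>2" using verts(2) by simp
  then show False using verts(3) distinct by auto
qed

lemma t_meets_\<psi>2: "t \<inter> \<psi>2 \<noteq> {}"
  using doubleton_in_triangle[OF t(1), of v w] doubleton_in_triangle[OF \<psi>_triangle(2), of v w]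
    verts distinct by auto

lemma attached_to_\<psi>1_misses_\<psi>2:
  assumes "singly_attached E V s \<psi>1"
  shows "card (tri_verts s \<inter> tri_verts \<psi>2) \<le> 1"
proof -
  have "s \<inter> \<psi>2 = {}" "is_triangle E s"
    using assms \<psi>_in_V \<psi>1_ne_\<psi>2 unfolding singly_attached_def by blast+
  then show ?thesis using triangles_disjoint_iff[OF _ \<psi>_triangle(2)] by simp
qed

lemma no_disjoint_attached_pair:
  assumes s1: "singly_attached E V s1 \<psi>1" and s2: "singly_attached E V s2 \<psi>2"
    and "card (tri_verts t \<inter> tri_verts s1) \<le> 1" "card (tri_verts t \<inter> tri_verts s2) \<le> 1"
    and "card (tri_verts s1 \<inter> tri_verts s2) \<le> 1"
  shows False
proof -
  have tri: "is_triangle E s1" "is_triangle E s2" using s1 s2 unfolding singly_attached_def by blast+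
  have disj: "t \<inter> s1 = {}" "t \<inter> s2 = {}" "s1 \<inter> s2 = {}"
    using assms(3-5) triangles_disjoint_iff[OF t(1) tri(1)] triangles_disjoint_iff[OF t(1) tri(2)]
      triangles_disjoint_iff[OF tri] by simp_all
  have "s1 \<noteq> {}" "s2 \<noteq> {}" using card_triangle[OF tri(1)] card_triangle[OF tri(2)] by auto
  then have ne: "t \<noteq> s1" "t \<noteq> s2" "s1 \<noteq> s2" using disj by auto
  have "card {t, s1, s2} \<le> card {\<psi>1, \<psi>2}"
  proof (rule max_packing_exchange[OF max_packing finite_E])
    show "{\<psi>1, \<psi>2} \<subseteq> V" using \<psi>_in_V by simp
    show "edge_disjoint_packing E {t, s1, s2}"
      using t(1) tri disj by (simp add: edge_disjoint_packing_insert Int_commute)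
    show "\<phi> \<in> {\<psi>1, \<psi>2}" if "y \<in> {t, s1, s2}" "\<phi> \<in> V" "y \<inter> \<phi> \<noteq> {}" for y \<phi>
      using that meets_only s1 s2 unfolding singly_attached_def by blast
  qed
  then show False using ne \<psi>1_ne_\<psi>2 by (simp add: card_insert_if)
qed

lemma far_attached_to_\<psi>2:
  assumes "tri_type E V \<psi>2 = 3"
  obtains s2 where "singly_attached E V s2 \<psi>2" "tri_verts s2 = {anchor s2 \<psi>2, w, q}"
    "anchor s2 \<psi>2 \<notin> {u, v, w, p, q}"
proof -
  have v: "v \<in> tri_verts \<psi>2" "v \<in> tri_verts \<psi>1" using verts by simp_all
  have "{w, q} \<in> \<psi>2" by (rule doubleton_in_triangle[OF \<psi>_triangle(2)]) (use verts(3) distinct in auto)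
  obtain s2 where "singly_attached E V s2 \<psi>2" "tri_verts s2 = {anchor s2 \<psi>2, w, q}"
      "anchor s2 \<psi>2 \<notin> tri_verts \<psi>2" "anchor s2 \<psi>2 \<notin> tri_verts \<psi>1"
    by (rule tri_type_3_attached_along[OF max_packing finite_E \<psi>_in_V(2,1) \<psi>1_ne_\<psi>2 v assms \<open>{w, q} \<in> \<psi>2\<close>])
  with that show ?thesis using verts by auto
qed

lemma not_both_tri_type_3: "\<not> (tri_type E V \<psi>1 = 3 \<and> tri_type E V \<psi>2 = 3)"
proof
  assume types: "tri_type E V \<psi>1 = 3 \<and> tri_type E V \<psi>2 = 3"
  have v: "v \<in> tri_verts \<psi>1" "v \<in> tri_verts \<psi>2" using verts by simp_all
  have "{u, p} \<in> \<psi>1" by (rule doubleton_in_triangle[OF \<psi>_triangle(1)]) (use verts(2) distinct in auto)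
  obtain s1 where s1: "singly_attached E V s1 \<psi>1" "tri_verts s1 = {anchor s1 \<psi>1, u, p}"
      "anchor s1 \<psi>1 \<notin> tri_verts \<psi>1" "anchor s1 \<psi>1 \<notin> tri_verts \<psi>2"
    by (rule tri_type_3_attached_along[OF max_packing finite_E \<psi>_in_V(1,2) \<psi>1_ne_\<psi>2[symmetric]
          v conjunct1[OF types] \<open>{u, p} \<in> \<psi>1\<close>])
  obtain s2 where s2: "singly_attached E V s2 \<psi>2" "tri_verts s2 = {anchor s2 \<psi>2, w, q}"
      "anchor s2 \<psi>2 \<notin> {u, v, w, p, q}"
    using far_attached_to_\<psi>2 conjunct2[OF types] by blast
  show False
  proof (rule no_disjoint_attached_pair[OF s1(1) s2(1)])
    show "card (tri_verts t \<inter> tri_verts s1) \<le> 1"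
      by (rule card_le_1_if_subset_singleton[of _ u]) (use verts s1 distinct in auto)
    show "card (tri_verts t \<inter> tri_verts s2) \<le> 1"
      by (rule card_le_1_if_subset_singleton[of _ w]) (use verts s2 distinct in auto)
    show "card (tri_verts s1 \<inter> tri_verts s2) \<le> 1"
      by (rule card_le_1_if_subset_singleton[of _ "anchor s1 \<psi>1"]) (use verts s1 s2 distinct in auto)
  qed
qed

lemma anchor_notin_t_if_base_uv:
  assumes "base E V \<psi>1 = {{u, v}}" "singly_attached E V s \<psi>1"
  shows "anchor s \<psi>1 \<notin> tri_verts t"
proof
  assume "anchor s \<psi>1 \<in> tri_verts t"
  moreover have "tri_verts s = insert (anchor s \<psi>1) {u, v}" "anchor s \<psi>1 \<notin> tri_verts \<psi>1"
    using singly_attached_verts_eq[OF packing assms(2) singly_attached_Int_eq_if_base[OF packing assms(2,1)]]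
    by blast+
  ultimately have "tri_verts s = tri_verts t" using verts by auto
  moreover have "is_triangle E s" using assms(2) unfolding singly_attached_def by blast
  ultimately have "s = t" using triangle_eqI[OF _ t(1)] by blast
  then show False
    using assms(2) t_meets_\<psi>2 \<psi>_in_V(2) \<psi>1_ne_\<psi>2 unfolding singly_attached_def by blast
qed

context
  assumes type_1: "tri_type E V \<psi>1 = 1"
begin

lemma base_\<psi>1: "base E V \<psi>1 = {base_edge E V \<psi>1}"
proof -
  obtain b where "base E V \<psi>1 = {b}"
    using type_1 unfolding tri_type_def by (rule card_1_singletonE)
  then show ?thesis unfolding base_edge_def by simp
qed

lemma attached_to_\<psi>1:
  assumes "singly_attached E V s \<psi>1"
  shows "tri_verts s = insert (anchor s \<psi>1) (base_edge E V \<psi>1)" "anchor s \<psi>1 \<notin> {u, v, p}"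
  using singly_attached_verts_eq[OF packing assms singly_attached_Int_eq_if_base[OF packing assms base_\<psi>1]]
    verts(2) by simp_all

context
  assumes type_3: "tri_type E V \<psi>2 = 3"
begin

lemma base_edge_\<psi>1_cases: "base_edge E V \<psi>1 = {u, v} \<or> base_edge E V \<psi>1 = {u, p}"
proof -
  have "base_edge E V \<psi>1 \<in> \<psi>1" using base_\<psi>1 base_subset[of E V \<psi>1] by blast
  moreover have "\<psi>1 = [{u, v, p}]\<^bsup>2\<^esup>"
    using triangle_verts(3)[OF \<psi>_triangle(1)] unfolding verts(2) by (rule sym)
  ultimately have "base_edge E V \<psi>1 \<in> {{u, v}, {v, p}, {u, p}}"
    using distinct by (simp add: nsets_2_triple)
  moreover have "base_edge E V \<psi>1 \<noteq> {v, p}"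
  proof
    assume b: "base_edge E V \<psi>1 = {v, p}"
    have "base_edge E V \<psi>1 \<in> base E V \<psi>1" by (simp add: base_\<psi>1)
    then obtain s where s: "singly_attached E V s \<psi>1"
      unfolding mem_base_iff[OF packing] by blast
    note S = attached_to_\<psi>1[OF s, unfolded b]
    have "anchor s \<psi>1 \<notin> tri_verts \<psi>2"
    proof
      assume "anchor s \<psi>1 \<in> tri_verts \<psi>2"
      then have "{v, anchor s \<psi>1} \<subseteq> tri_verts s \<inter> tri_verts \<psi>2" using S(1) verts(3) by auto
      then have "card {v, anchor s \<psi>1} \<le> card (tri_verts s \<inter> tri_verts \<psi>2)"
        using triangle_verts(2)[OF \<psi>_triangle(2)] by (intro card_mono) simp_all
      then have "card {v, anchor s \<psi>1} \<le> 1" using attached_to_\<psi>1_misses_\<psi>2[OF s] by linarith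
      moreover have "v \<noteq> anchor s \<psi>1" using S(2) by blast
      ultimately show False by simp
    qed
    obtain s2 where s2: "singly_attached E V s2 \<psi>2" "tri_verts s2 = {anchor s2 \<psi>2, w, q}"
        "anchor s2 \<psi>2 \<notin> {u, v, w, p, q}"
      using far_attached_to_\<psi>2[OF type_3] by blast
    show False
    proof (rule no_disjoint_attached_pair[OF s s2(1)])
      show "card (tri_verts t \<inter> tri_verts s) \<le> 1"
        by (rule card_le_1_if_subset_singleton[of _ v]) (use verts S \<open>anchor s \<psi>1 \<notin> tri_verts \<psi>2\<close> distinct in auto)
      show "card (tri_verts t \<inter> tri_verts s2) \<le> 1"
        by (rule card_le_1_if_subset_singleton[of _ w]) (use verts s2 distinct in auto)
      show "card (tri_verts s \<inter> tri_verts s2) \<le> 1"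
        by (rule card_le_1_if_subset_singleton[of _ "anchor s \<psi>1"]) (use S s2 distinct in auto)
    qed
  qed
  ultimately show ?thesis by blast
qed

lemma anchor_eq_w_if_base_up:
  assumes "base_edge E V \<psi>1 = {u, p}" "singly_attached E V s \<psi>1"
  shows "anchor s \<psi>1 = w"
proof (rule ccontr)
  assume "anchor s \<psi>1 \<noteq> w"
  note S = attached_to_\<psi>1[OF assms(2), unfolded assms(1)]
  obtain s2 where s2: "singly_attached E V s2 \<psi>2" "tri_verts s2 = {anchor s2 \<psi>2, w, q}"
      "anchor s2 \<psi>2 \<notin> {u, v, w, p, q}"
    using far_attached_to_\<psi>2[OF type_3] by blast
  show False
  proof (rule no_disjoint_attached_pair[OF assms(2) s2(1)])
    show "card (tri_verts t \<inter> tri_verts s) \<le> 1"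
      by (rule card_le_1_if_subset_singleton[of _ u]) (use verts S \<open>anchor s \<psi>1 \<noteq> w\<close> distinct in auto)
    show "card (tri_verts t \<inter> tri_verts s2) \<le> 1"
      by (rule card_le_1_if_subset_singleton[of _ w]) (use verts s2 distinct in auto)
    show "card (tri_verts s \<inter> tri_verts s2) \<le> 1"
      by (rule card_le_1_if_subset_singleton[of _ "anchor s \<psi>1"]) (use S s2 distinct in auto)
  qed
qed

lemma base_edge_in_t_or_unique_anchor_in_t:
  "(base_edge E V \<psi>1 \<in> t
     \<or> ((\<exists>!s. singly_attached E V s \<psi>1) \<and>
        (\<forall>s. singly_attached E V s \<psi>1 \<longrightarrow> anchor s \<psi>1 \<in> tri_verts t)))
   \<and> ((\<exists>!s. singly_attached E V s \<psi>1) \<and>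
        (\<forall>s. singly_attached E V s \<psi>1 \<longrightarrow> anchor s \<psi>1 \<in> tri_verts t)
      \<longrightarrow> (\<exists>x. tri_verts \<psi>1 \<inter> tri_verts \<psi>2 = {x} \<and> x \<notin> base_edge E V \<psi>1))"
  (is "(?in_t \<or> ?unique) \<and> _")
proof -
  have "base_edge E V \<psi>1 \<in> base E V \<psi>1" by (simp add: base_\<psi>1)
  then obtain s0 where s0: "singly_attached E V s0 \<psi>1"
    unfolding mem_base_iff[OF packing] by blast
  have common: "tri_verts \<psi>1 \<inter> tri_verts \<psi>2 = {v}" using verts distinct by auto
  from base_edge_\<psi>1_cases show ?thesis
  proof
    assume uv: "base_edge E V \<psi>1 = {u, v}"
    have ?in_t unfolding uv
      by (rule doubleton_in_triangle[OF t(1)]) (use verts(1) distinct in auto)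
    moreover have "anchor s0 \<psi>1 \<notin> tri_verts t"
      using anchor_notin_t_if_base_uv[OF _ s0] base_\<psi>1 uv by simp
    ultimately show ?thesis using s0 by blast
  next
    assume up: "base_edge E V \<psi>1 = {u, p}"
    have verts_attached: "tri_verts s = {w, u, p}" if "singly_attached E V s \<psi>1" for s
      using attached_to_\<psi>1(1)[OF that] anchor_eq_w_if_base_up[OF up that] up by simp
    have "s = s0" if "singly_attached E V s \<psi>1" for s
      using triangle_eqI[of E s E s0] verts_attached[OF that] verts_attached[OF s0] that s0
      unfolding singly_attached_def by simp
    moreover have "anchor s \<psi>1 \<in> tri_verts t" if "singly_attached E V s \<psi>1" for s
      using anchor_eq_w_if_base_up[OF up that] verts(1) by simp
    ultimately have ?unique using s0 by blast
    moreover have "v \<notin> base_edge E V \<psi>1" using up distinct by auto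
    ultimately show ?thesis using common by blast
  qed
qed

end

end

end

theorem proposition12:
  fixes E :: "'a set set" and \<V> :: "'a set set set" and t \<psi>1 \<psi>2 :: "'a set set"
  assumes "simple_graph E"
    and "max_packing E \<V>"
    and "is_triangle E t" and "t \<notin> \<V>"
    and "\<psi>1 \<noteq> \<psi>2"
    and "{\<phi> \<in> \<V>. t \<inter> \<phi> \<noteq> {}} = {\<psi>1, \<psi>2}"
    and "tri_type E \<V> \<psi>1 \<noteq> 0" and "tri_type E \<V> \<psi>2 \<noteq> 0"
  shows "\<not> (tri_type E \<V> \<psi>1 = 3 \<and> tri_type E \<V> \<psi>2 = 3)
         \<and> ((tri_type E \<V> \<psi>1 = 1 \<and> tri_type E \<V> \<psi>2 = 1)
            \<or> (tri_type E \<V> \<psi>1 = 1 \<and> tri_type E \<V> \<psi>2 = 3)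
            \<or> (tri_type E \<V> \<psi>1 = 3 \<and> tri_type E \<V> \<psi>2 = 1))
         \<and> (tri_type E \<V> \<psi>1 = 1 \<and> tri_type E \<V> \<psi>2 = 3 \<longrightarrow>
              (base_edge E \<V> \<psi>1 \<in> t
               \<or> ((\<exists>!s. singly_attached E \<V> s \<psi>1) \<and>
                  (\<forall>s. singly_attached E \<V> s \<psi>1 \<longrightarrow> anchor s \<psi>1 \<in> tri_verts t)))
            \<and> ((\<exists>!s. singly_attached E \<V> s \<psi>1) \<and>
                  (\<forall>s. singly_attached E \<V> s \<psi>1 \<longrightarrow> anchor s \<psi>1 \<in> tri_verts t)
               \<longrightarrow> (\<exists>v. tri_verts \<psi>1 \<inter> tri_verts \<psi>2 = {v} \<and> v \<notin> base_edge E \<V> \<psi>1)))"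
proof -
  have "finite E" using assms(1) by (simp add: simple_graph_def)
  have packing: "edge_disjoint_packing E \<V>" using assms(2) by (simp add: max_packing_def)
  have meets: "\<phi> \<in> \<V> \<and> t \<inter> \<phi> \<noteq> {} \<longleftrightarrow> \<phi> = \<psi>1 \<or> \<phi> = \<psi>2" for \<phi>
    using eqset_imp_iff[OF assms(6), of \<phi>] by simp
  then have in_V: "\<psi>1 \<in> \<V>" "\<psi>2 \<in> \<V>" and "t \<inter> \<psi>1 \<noteq> {}" "t \<inter> \<psi>2 \<noteq> {}" by blast+
  moreover have "t \<noteq> \<psi>1" "t \<noteq> \<psi>2" using assms(4) in_V by blast+
  moreover have "\<psi>1 \<inter> \<psi>2 = {}" using edge_disjoint_packingD(2)[OF packing in_V] assms(5) by blast
  ultimately obtain u v w p q where "tri_verts t = {u, v, w}" "tri_verts \<psi>1 = {u, v, p}"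
      "tri_verts \<psi>2 = {v, w, q}" "distinct [u, v, w, p, q]"
    using two_attached_configuration[OF assms(3) edge_disjoint_packingD(1)[OF packing in_V(1)]
        edge_disjoint_packingD(1)[OF packing in_V(2)]] by blast
  then interpret two_attached_triangle E \<V> t \<psi>1 \<psi>2 u v w p q
    using assms(2-4) \<open>finite E\<close> in_V meets by unfold_locales blast+
  have "tri_type E \<V> \<psi>1 \<in> {1, 3}" "tri_type E \<V> \<psi>2 \<in> {1, 3}"
    using tri_type_cases[OF assms(2) \<open>finite E\<close> in_V(1)] tri_type_cases[OF assms(2) \<open>finite E\<close> in_V(2)]
      assms(7,8) by auto
  then show ?thesis
    using not_both_tri_type_3 base_edge_in_t_or_unique_anchor_in_t by auto
qed

end
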